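(* In the setting described in the context, consider the optimization problem $$\max_{\boldsymbol\alpha}\ \min_{(i,\theta_b)\in\Xi}W_i(\theta_b)G_i(\theta_b)\quad\text{subject to}\quad\sum_{i=1}^k\sum_{b=1}^B\alpha_i(\theta_b)=1,\ \alpha_i(\theta_b)\ge0.$$ An allocation $\boldsymbol\alpha$ is optimal for this problem if and only if it satisfies all of the following: (i) (global balance) for all $1\le b\le B$, $\ \alpha_{i^b}^2(\theta_b)/\lambda_{i^b}^2(\theta_b)=\sum_{i\ne i^b,\,i\ne i^*}\alpha_i^2(\theta_b)/\lambda_i^2(\theta_b)$; (ii) (pairwise balance) for all $(i,\theta_b),(j,\theta_{b'})\in\Xi$, $\ W_i(\theta_b)G_i(\theta_b)=W_j(\theta_{b'})G_j(\theta_{b'})$; (iii) $\alpha_{i^*}(\theta_b)=0$ for all $\theta_b\notin\Theta_{i^*}$.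
   Context: There are $k\ge2$ solutions and $B$ parameter values $\theta_1,\dots,\theta_B$ with probabilities $p_1,\dots,p_B>0$, $\sum_bp_b=1$. For each $i,b$, $y_i(\theta_b)$ is a real number (mean simulation output) and $\lambda_i(\theta_b)>0$ (simulation standard deviation). Each $i^b=\arg\min_iy_i(\theta_b)$ is assumed unique, and $i^*=\arg\max_i\sum_bp_b\mathbf 1\{i=i^b\}$ is assumed unique. Favorable sets: $\Theta_i=\{\theta_b:i^b=i\}$. For an allocation $\boldsymbol\alpha=(\alpha_i(\theta_b))$ and $i\ne i^b$, $$G_i(\theta_b)=\frac{(y_i(\theta_b)-y_{i^b}(\theta_b))^2}{2\left(\lambda_i^2(\theta_b)/\alpha_i(\theta_b)+\lambda_{i^b}^2(\theta_b)/\alpha_{i^b}(\theta_b)\right)},$$ with $G_i(\theta_b)=0$ if $\alpha_i(\theta_b)=0$ or $\alpha_{i^b}(\theta_b)=0$. Let $d_j=\sum_bp_b\mathbf 1\{i^*=i^b\}-\sum_bp_b\mathbf 1\{j=i^b\}$ and $\Xi=\{(i,\theta_b):i\ne i^*,i\ne i^b\}$. Balance weights for $(i,\theta_b)\in\Xi$: $$W_i(\theta_b)=\begin{cases}\max\left\{\min\left(\min_{j\ne i^*}d_j,\ d_i/2\right)/p_b,\ 1\right\},&\theta_b\in\Theta_{i^*},\\ \max\{d_i/p_b,1\},&\theta_b\notin\Theta_{i^*}.\end{cases}$$ *)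

theory Defs
  imports Complex_Main
begin

text \<open>Solutions are indexed by i in {0..<k}, parameter values theta_b by b in {0..<B}.
  y i b = y_i(theta_b), lam i b = lambda_i(theta_b), p b = p_b,
  an allocation is al :: nat => nat => real with al i b = alpha_i(theta_b).\<close>

definition ibest :: "nat \<Rightarrow> (nat \<Rightarrow> nat \<Rightarrow> real) \<Rightarrow> nat \<Rightarrow> nat" where
  "ibest k y b = (THE i. i < k \<and> (\<forall>j<k. y i b \<le> y j b))"

definition freq :: "nat \<Rightarrow> nat \<Rightarrow> (nat \<Rightarrow> real) \<Rightarrow> (nat \<Rightarrow> nat \<Rightarrow> real) \<Rightarrow> nat \<Rightarrow> real" where
  "freq k B p y i = (\<Sum>b<B. p b * (if i = ibest k y b then 1 else 0))"

definition istar :: "nat \<Rightarrow> nat \<Rightarrow> (nat \<Rightarrow> real) \<Rightarrow> (nat \<Rightarrow> nat \<Rightarrow> real) \<Rightarrow> nat" where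
  "istar k B p y = (THE i. i < k \<and> (\<forall>j<k. freq k B p y j \<le> freq k B p y i))"

definition Gval :: "nat \<Rightarrow> (nat \<Rightarrow> nat \<Rightarrow> real) \<Rightarrow> (nat \<Rightarrow> nat \<Rightarrow> real)
    \<Rightarrow> (nat \<Rightarrow> nat \<Rightarrow> real) \<Rightarrow> nat \<Rightarrow> nat \<Rightarrow> real" where
  "Gval k y lam al i b =
     (let ib = ibest k y b in
      if al i b = 0 \<or> al ib b = 0 then 0
      else (y i b - y ib b)\<^sup>2 / (2 * ((lam i b)\<^sup>2 / al i b + (lam ib b)\<^sup>2 / al ib b)))"

definition dgap :: "nat \<Rightarrow> nat \<Rightarrow> (nat \<Rightarrow> real) \<Rightarrow> (nat \<Rightarrow> nat \<Rightarrow> real) \<Rightarrow> nat \<Rightarrow> real" where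
  "dgap k B p y j = freq k B p y (istar k B p y) - freq k B p y j"

definition Wt :: "nat \<Rightarrow> nat \<Rightarrow> (nat \<Rightarrow> real) \<Rightarrow> (nat \<Rightarrow> nat \<Rightarrow> real) \<Rightarrow> nat \<Rightarrow> nat \<Rightarrow> real" where
  "Wt k B p y i b =
     (if ibest k y b = istar k B p y
      then max (min (Min {dgap k B p y j | j. j < k \<and> j \<noteq> istar k B p y}) (dgap k B p y i / 2) / p b) 1
      else max (dgap k B p y i / p b) 1)"

definition Xi :: "nat \<Rightarrow> nat \<Rightarrow> (nat \<Rightarrow> real) \<Rightarrow> (nat \<Rightarrow> nat \<Rightarrow> real) \<Rightarrow> (nat \<times> nat) set" where
  "Xi k B p y = {(i, b). i < k \<and> b < B \<and> i \<noteq> istar k B p y \<and> i \<noteq> ibest k y b}"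

definition feasible :: "nat \<Rightarrow> nat \<Rightarrow> (nat \<Rightarrow> nat \<Rightarrow> real) \<Rightarrow> bool" where
  "feasible k B al \<longleftrightarrow> (\<Sum>i<k. \<Sum>b<B. al i b) = 1 \<and> (\<forall>i<k. \<forall>b<B. 0 \<le> al i b)"

definition objective :: "nat \<Rightarrow> nat \<Rightarrow> (nat \<Rightarrow> real) \<Rightarrow> (nat \<Rightarrow> nat \<Rightarrow> real)
    \<Rightarrow> (nat \<Rightarrow> nat \<Rightarrow> real) \<Rightarrow> (nat \<Rightarrow> nat \<Rightarrow> real) \<Rightarrow> real" where
  "objective k B p y lam al =
     Min ((\<lambda>(i, b). Wt k B p y i b * Gval k y lam al i b) ` Xi k B p y)"

definition optimal :: "nat \<Rightarrow> nat \<Rightarrow> (nat \<Rightarrow> real) \<Rightarrow> (nat \<Rightarrow> nat \<Rightarrow> real)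
    \<Rightarrow> (nat \<Rightarrow> nat \<Rightarrow> real) \<Rightarrow> (nat \<Rightarrow> nat \<Rightarrow> real) \<Rightarrow> bool" where
  "optimal k B p y lam al \<longleftrightarrow> feasible k B al \<and>
     (\<forall>be. feasible k B be \<longrightarrow> objective k B p y lam be \<le> objective k B p y lam al)"

end

theory Submission
  imports Defs
begin

text \<open>
  Call an allocation balanced if it satisfies (i)--(iii); then all weighted rates \<open>W\<^sub>i G\<^sub>i\<close> of
  the pairs in \<open>\<Xi>\<close> share one value \<open>c\<close>. Fix a column \<open>b\<close> and write \<open>0\<close> for its best solution
  \<open>i\<^sup>b\<close>. The map \<open>(x, z) \<mapsto> 1 / (\<lambda>\<^sub>i\<^sup>2 / x + \<lambda>\<^sub>0\<^sup>2 / z)\<close> is concave and positively homogeneous,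
  so it lies below its tangent plane at \<open>(\<alpha>\<^sub>i, \<alpha>\<^sub>0)\<close>. With the shares
  \<open>s\<^sub>i = (\<alpha>\<^sub>i / \<lambda>\<^sub>i)\<^sup>2 / (\<alpha>\<^sub>0 / \<lambda>\<^sub>0)\<^sup>2\<close> this says that every feasible \<open>\<beta>\<close> satisfies
  \<open>W\<^sub>i G\<^sub>i(\<beta>) (\<alpha>\<^sub>i + s\<^sub>i \<alpha>\<^sub>0) \<le> c (\<beta>\<^sub>i + s\<^sub>i \<beta>\<^sub>0)\<close>. Global balance says exactly that the shares of a
  column sum to 1, so the weights \<open>\<alpha>\<^sub>i + s\<^sub>i \<alpha>\<^sub>0\<close> sum to 1 over \<open>\<Xi>\<close> while the right-hand sides sum
  to at most \<open>c\<close>. Hence the worst weighted rate of \<open>\<beta>\<close> is at most \<open>c\<close>, and equality forces every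
  inequality to be tight, which makes \<open>\<beta>\<close> balanced too.

  A balanced allocation exists: in column \<open>b\<close> take \<open>\<alpha>\<^sub>0 = \<lambda>\<^sub>0\<^sup>2 / u\<close> and
  \<open>\<alpha>\<^sub>i = \<lambda>\<^sub>i\<^sup>2 / (A\<^sub>i - u)\<close> with \<open>A\<^sub>i = W\<^sub>i (y\<^sub>i - y\<^sub>0)\<^sup>2 / 2\<close>, which gives every pair the weighted
  rate 1; the intermediate value theorem yields a \<open>u\<close> in \<open>(0, min A\<^sub>i)\<close> for which global balance
  holds, and normalising the total mass to 1 keeps the rates equal.
\<close>

section \<open>A tangent-plane inequality and balancing points\<close>

lemma two_term_cauchy_schwarz_gap:
  fixes l m x y u v :: real
  assumes "0 < x" "0 < y" "0 < u" "0 < v"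
  shows "(l\<^sup>2*u/x\<^sup>2 + m\<^sup>2*v/y\<^sup>2) * (l\<^sup>2/u + m\<^sup>2/v) - (l\<^sup>2/x + m\<^sup>2/y)\<^sup>2
       = l\<^sup>2 * m\<^sup>2 * (v*x - u*y)\<^sup>2 / (u*v*x\<^sup>2*y\<^sup>2)"
  using assms by (simp add: field_simps power2_eq_square)

lemma harmonic_tangent_gap:
  fixes l m x y u v :: real
  assumes "0 < l" "0 < m" "0 < x" "0 < y" "0 < u" "0 < v"
  defines "P \<equiv> l\<^sup>2/x + m\<^sup>2/y" and "Q \<equiv> l\<^sup>2/u + m\<^sup>2/v"
  shows "(u + (x/l)\<^sup>2 / (y/m)\<^sup>2 * v) / P - (x + (x/l)\<^sup>2 / (y/m)\<^sup>2 * y) / Q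
       = m\<^sup>2 * (v*x - u*y)\<^sup>2 / (P * Q * u * v * y\<^sup>2)"
proof -
  have "0 < P" "0 < Q" unfolding P_def Q_def using assms by (simp_all add: add_pos_pos)
  have "u + (x/l)\<^sup>2 / (y/m)\<^sup>2 * v = x\<^sup>2/l\<^sup>2 * (l\<^sup>2*u/x\<^sup>2 + m\<^sup>2*v/y\<^sup>2)"
    using assms(1-6) by (simp add: field_simps)
  moreover have "x + (x/l)\<^sup>2 / (y/m)\<^sup>2 * y = x\<^sup>2/l\<^sup>2 * P"
    using assms unfolding P_def by (simp add: field_simps power2_eq_square)
  ultimately have "(u + (x/l)\<^sup>2 / (y/m)\<^sup>2 * v) / P - (x + (x/l)\<^sup>2 / (y/m)\<^sup>2 * y) / Q
      = x\<^sup>2/l\<^sup>2 * ((l\<^sup>2*u/x\<^sup>2 + m\<^sup>2*v/y\<^sup>2) / P - P / Q)"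
    using \<open>0 < P\<close> \<open>0 < Q\<close> by (simp add: algebra_simps)
  also have "\<dots> = x\<^sup>2/l\<^sup>2 * ((l\<^sup>2*u/x\<^sup>2 + m\<^sup>2*v/y\<^sup>2) * Q - P\<^sup>2) / (P * Q)"
    using \<open>0 < P\<close> \<open>0 < Q\<close> by (simp add: field_simps power2_eq_square)
  also have "\<dots> = x\<^sup>2/l\<^sup>2 * (l\<^sup>2 * m\<^sup>2 * (v*x - u*y)\<^sup>2 / (u*v*x\<^sup>2*y\<^sup>2)) / (P * Q)"
    unfolding P_def Q_def two_term_cauchy_schwarz_gap[OF assms(3-6)] ..
  also have "\<dots> = m\<^sup>2 * (v*x - u*y)\<^sup>2 / (P * Q * u * v * y\<^sup>2)"
    using assms(1-6) by (simp add: field_simps)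
  finally show ?thesis .
qed

lemma sum_inverse_square_le:
  fixes S :: "'a set" and A l :: "'a \<Rightarrow> real"
  assumes "finite S" "0 < a" "\<And>i. i \<in> S \<Longrightarrow> a \<le> A i" "u \<le> a / 2"
  shows "(\<Sum>i\<in>S. (l i)\<^sup>2 / (A i - u)\<^sup>2) \<le> (2 * sqrt (\<Sum>i\<in>S. (l i)\<^sup>2) / a)\<^sup>2"
proof -
  have "(\<Sum>i\<in>S. (l i)\<^sup>2 / (A i - u)\<^sup>2) \<le> (\<Sum>i\<in>S. (l i)\<^sup>2 / (a / 2)\<^sup>2)"
  proof (rule sum_mono)
    fix i assume "i \<in> S"
    then have "a / 2 \<le> A i - u" using assms(3,4) by fastforce
    then show "(l i)\<^sup>2 / (A i - u)\<^sup>2 \<le> (l i)\<^sup>2 / (a / 2)\<^sup>2"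
      using assms(2) by (intro divide_left_mono power_mono mult_pos_pos) auto
  qed
  also have "\<dots> = (2 * sqrt (\<Sum>i\<in>S. (l i)\<^sup>2) / a)\<^sup>2"
    by (simp add: sum_divide_distrib[symmetric] sum_distrib_left power_divide power_mult_distrib
        sum_nonneg mult.commute)
  finally show ?thesis .
qed

lemma balancing_point_exists:
  fixes S :: "'a set" and A l :: "'a \<Rightarrow> real" and L :: real
  assumes "finite S" "S \<noteq> {}" and A_pos: "\<And>i. i \<in> S \<Longrightarrow> 0 < A i"
    and l_pos: "\<And>i. i \<in> S \<Longrightarrow> 0 < l i" and "0 < L"
  shows "\<exists>u>0. (\<forall>i\<in>S. u < A i) \<and> L\<^sup>2 / u\<^sup>2 = (\<Sum>i\<in>S. (l i)\<^sup>2 / (A i - u)\<^sup>2)"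
proof -
  define f where "f u = L\<^sup>2 / u\<^sup>2 - (\<Sum>i\<in>S. (l i)\<^sup>2 / (A i - u)\<^sup>2)" for u
  define a where "a = Min (A ` S)"
  have "a \<in> A ` S" unfolding a_def using assms(1,2) by (intro Min_in) auto
  then obtain i0 where i0: "i0 \<in> S" "A i0 = a" by auto
  have a_le: "a \<le> A i" if "i \<in> S" for i
    using assms(1) that unfolding a_def by simp
  have "0 < a" "0 < l i0" using A_pos l_pos i0 by auto
  define \<Lambda> where "\<Lambda> = (\<Sum>i\<in>S. (l i)\<^sup>2)"
  have "0 \<le> \<Lambda>" unfolding \<Lambda>_def by (simp add: sum_nonneg)
  define \<theta>1 where "\<theta>1 = L / (L + sqrt \<Lambda>)"
  define \<theta>2 where "\<theta>2 = L / (L + l i0)"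
  define u1 where "u1 = a / 2 * \<theta>1"
  define u2 where "u2 = a / 2 * (1 + \<theta>2)"
  have "0 < \<theta>1" "\<theta>1 \<le> 1" "0 < \<theta>2" "\<theta>2 < 1"
    using \<open>0 < L\<close> \<open>0 \<le> \<Lambda>\<close> \<open>0 < l i0\<close> unfolding \<theta>1_def \<theta>2_def
    by (simp_all add: add_pos_nonneg)
  then have u1: "0 < u1" "u1 \<le> a / 2" and u2: "a / 2 \<le> u2" "u2 < a"
    using \<open>0 < a\<close> unfolding u1_def u2_def by (simp_all add: mult_left_le)
  have "f u2 \<le> 0 \<and> 0 \<le> f u1"
  proof
    have "L\<^sup>2 / u2\<^sup>2 \<le> L\<^sup>2 / (a / 2)\<^sup>2"
      using u2 \<open>0 < a\<close> by (intro divide_left_mono power_mono mult_pos_pos) auto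
    also have "\<dots> = (2 * L / a)\<^sup>2" by (simp add: power_divide)
    also have "\<dots> \<le> (2 * (L + l i0) / a)\<^sup>2"
      using \<open>0 < a\<close> \<open>0 < L\<close> \<open>0 < l i0\<close> by (intro power_mono divide_right_mono) auto
    also have "2 * (L + l i0) / a = l i0 / (A i0 - u2)"
      using \<open>0 < a\<close> \<open>0 < L\<close> \<open>0 < l i0\<close> unfolding i0(2) u2_def \<theta>2_def by (simp add: field_simps)
    also have "(l i0 / (A i0 - u2))\<^sup>2 \<le> (\<Sum>i\<in>S. (l i)\<^sup>2 / (A i - u2)\<^sup>2)"
      using member_le_sum[of i0 S "\<lambda>i. (l i)\<^sup>2 / (A i - u2)\<^sup>2"] assms(1) i0(1)
      by (simp add: power_divide)
    finally show "f u2 \<le> 0" unfolding f_def by simp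
  next
    have "(\<Sum>i\<in>S. (l i)\<^sup>2 / (A i - u1)\<^sup>2) \<le> (2 * sqrt \<Lambda> / a)\<^sup>2"
      unfolding \<Lambda>_def using assms(1) \<open>0 < a\<close> a_le u1(2) by (rule sum_inverse_square_le)
    also have "\<dots> \<le> (2 * (L + sqrt \<Lambda>) / a)\<^sup>2"
      using \<open>0 < a\<close> \<open>0 < L\<close> \<open>0 \<le> \<Lambda>\<close> by (intro power_mono divide_right_mono) auto
    also have "2 * (L + sqrt \<Lambda>) / a = L / u1"
      using \<open>0 < a\<close> \<open>0 < L\<close> \<open>0 \<le> \<Lambda>\<close> unfolding u1_def \<theta>1_def by (simp add: field_simps add_pos_nonneg)
    finally show "0 \<le> f u1" unfolding f_def by (simp add: power_divide)
  qed
  moreover have "isCont f u" if "u1 \<le> u" "u \<le> u2" for u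
  proof -
    have "0 < u" "\<forall>i\<in>S. u < A i" using that u1 u2 a_le by force+
    then show ?thesis unfolding f_def by (intro continuous_intros) auto
  qed
  ultimately obtain u where "u1 \<le> u" "u \<le> u2" "f u = 0"
    using IVT2[of f u2 0 u1] u1 u2 by auto
  then show ?thesis
    using u1 u2 a_le unfolding f_def by (intro exI[of _ u]) force
qed

section \<open>Best solutions, rates and feasible allocations\<close>

lemma ibest_minimal:
  assumes "\<exists>!i. i < k \<and> (\<forall>j<k. y i b \<le> y j b)"
  shows "ibest k y b < k \<and> (\<forall>j<k. y (ibest k y b) b \<le> y j b)"
  unfolding ibest_def using assms by (rule theI')

lemma ibest_strict:
  assumes "\<exists>!i. i < k \<and> (\<forall>j<k. y i b \<le> y j b)" "i < k" "i \<noteq> ibest k y b"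
  shows "y (ibest k y b) b < y i b"
proof (rule ccontr)
  note min = ibest_minimal[of k y b, OF assms(1)]
  assume "\<not> ?thesis"
  then have "\<forall>j<k. y i b \<le> y j b" using min by force
  then show False using min assms by blast
qed

lemma istar_maximal:
  assumes "\<exists>!i. i < k \<and> (\<forall>j<k. freq k B p y j \<le> freq k B p y i)"
  shows "istar k B p y < k \<and> (\<forall>j<k. freq k B p y j \<le> freq k B p y (istar k B p y))"
  unfolding istar_def using assms by (rule theI')

lemma sum_freq:
  assumes "\<And>b. b < B \<Longrightarrow> ibest k y b < k"
  shows "(\<Sum>i<k. freq k B p y i) = (\<Sum>b<B. p b)"
proof -
  have "(\<Sum>i<k. freq k B p y i) = (\<Sum>b<B. \<Sum>i<k. p b * (if i = ibest k y b then 1 else 0))"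
    unfolding freq_def by (rule sum.swap)
  also have "\<dots> = (\<Sum>b<B. p b)"
    using assms by (intro sum.cong) (simp_all add: sum_distrib_left[symmetric])
  finally show ?thesis .
qed

lemma istar_is_best_somewhere:
  assumes "\<forall>b<B. \<exists>!i. i < k \<and> (\<forall>j<k. y i b \<le> y j b)"
    and "\<exists>!i. i < k \<and> (\<forall>j<k. freq k B p y j \<le> freq k B p y i)"
    and "(\<Sum>b<B. p b) = 1"
  shows "\<exists>b<B. ibest k y b = istar k B p y"
proof (rule ccontr)
  assume "\<not> ?thesis"
  then have "freq k B p y (istar k B p y) = 0"
    unfolding freq_def by (intro sum.neutral) auto
  then have "freq k B p y i \<le> 0" if "i < k" for i
    using istar_maximal[of k B p y, OF assms(2)] that by metis
  then have "(\<Sum>i<k. freq k B p y i) \<le> 0" by (intro sum_nonpos) simp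
  moreover have "(\<Sum>i<k. freq k B p y i) = 1"
    using sum_freq[of B k y p] ibest_minimal assms(1,3) by simp
  ultimately show False by simp
qed

lemma Gval_eq:
  assumes "al i b \<noteq> 0" "al (ibest k y b) b \<noteq> 0"
  shows "Gval k y lam al i b = (y i b - y (ibest k y b) b)\<^sup>2 /
    (2 * ((lam i b)\<^sup>2 / al i b + (lam (ibest k y b) b)\<^sup>2 / al (ibest k y b) b))"
  using assms unfolding Gval_def Let_def by simp

lemma Gval_eq_0: "al i b = 0 \<or> al (ibest k y b) b = 0 \<Longrightarrow> Gval k y lam al i b = 0"
  unfolding Gval_def Let_def by auto

lemma Gval_nonneg:
  assumes "0 \<le> al i b" "0 \<le> al (ibest k y b) b"
  shows "0 \<le> Gval k y lam al i b"
  using assms unfolding Gval_def Let_def by simp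

lemma Gval_scale:
  assumes "0 < t"
  shows "Gval k y lam (\<lambda>i b. t * al i b) i b = t * Gval k y lam al i b"
proof (cases "al i b = 0 \<or> al (ibest k y b) b = 0")
  case True
  then show ?thesis using assms by (auto simp: Gval_eq_0)
next
  case False
  have "(lam i b)\<^sup>2 / (t * al i b) + (lam (ibest k y b) b)\<^sup>2 / (t * al (ibest k y b) b)
      = ((lam i b)\<^sup>2 / al i b + (lam (ibest k y b) b)\<^sup>2 / al (ibest k y b) b) / t"
    by (simp add: add_divide_distrib mult.commute)
  then show ?thesis using False assms by (simp add: Gval_eq)
qed

lemma feasible_nonneg: "feasible k B al \<Longrightarrow> i < k \<Longrightarrow> b < B \<Longrightarrow> 0 \<le> al i b"
  unfolding feasible_def by blast

lemma feasible_total: "feasible k B al \<Longrightarrow> (\<Sum>b<B. \<Sum>i<k. al i b) = 1"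
  unfolding feasible_def by (simp add: sum.swap[of _ "{..<B}"])

lemma Wt_pos: "0 < Wt k B p y i b"
  unfolding Wt_def by (simp add: less_max_iff_disj)

section \<open>Max-min allocation with positive weights\<close>

locale max_min_allocation =
  fixes k B :: nat and y lam w :: "nat \<Rightarrow> nat \<Rightarrow> real" and ist :: nat
  assumes best_unique: "\<And>b. b < B \<Longrightarrow> \<exists>!i. i < k \<and> (\<forall>j<k. y i b \<le> y j b)"
    and lam_pos: "\<And>i b. i < k \<Longrightarrow> b < B \<Longrightarrow> 0 < lam i b"
    and w_pos: "\<And>i b. i < k \<Longrightarrow> b < B \<Longrightarrow> 0 < w i b"
    and ist_lt: "ist < k"
    and competitor_exists: "\<exists>b<B. \<exists>i<k. i \<noteq> ibest k y b \<and> i \<noteq> ist"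
begin

abbreviation best :: "nat \<Rightarrow> nat" where
  "best b \<equiv> ibest k y b"

definition competitors :: "nat \<Rightarrow> nat set" where
  "competitors b = {i. i < k \<and> i \<noteq> best b \<and> i \<noteq> ist}"

definition pairs :: "(nat \<times> nat) set" where
  "pairs = {(i, b). b < B \<and> i \<in> competitors b}"

lemma mem_competitors [simp]: "i \<in> competitors b \<longleftrightarrow> i < k \<and> i \<noteq> best b \<and> i \<noteq> ist"
  unfolding competitors_def by simp

lemma finite_competitors [simp]: "finite (competitors b)"
  unfolding competitors_def by simp

lemma mem_pairs [simp]: "(i, b) \<in> pairs \<longleftrightarrow> b < B \<and> i \<in> competitors b"
  unfolding pairs_def by simp

abbreviation rate :: "(nat \<Rightarrow> nat \<Rightarrow> real) \<Rightarrow> nat \<Rightarrow> nat \<Rightarrow> real" where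
  "rate al i b \<equiv> w i b * Gval k y lam al i b"

definition worst_rate :: "(nat \<Rightarrow> nat \<Rightarrow> real) \<Rightarrow> real" where
  "worst_rate al = Min ((\<lambda>(i, b). rate al i b) ` pairs)"

definition gain :: "nat \<Rightarrow> nat \<Rightarrow> real" where
  "gain i b = w i b * (y i b - y (best b) b)\<^sup>2 / 2"

definition diff_variance :: "(nat \<Rightarrow> nat \<Rightarrow> real) \<Rightarrow> nat \<Rightarrow> nat \<Rightarrow> real" where
  "diff_variance al i b = (lam i b)\<^sup>2 / al i b + (lam (best b) b)\<^sup>2 / al (best b) b"

lemma best_lt: "b < B \<Longrightarrow> best b < k"
  using ibest_minimal[of k y b, OF best_unique] by simp

lemma best_less: "b < B \<Longrightarrow> i \<in> competitors b \<Longrightarrow> y (best b) b < y i b"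
  using ibest_strict[of k y b i, OF best_unique] by simp

lemma finite_pairs: "finite pairs"
  by (rule finite_subset[of _ "{..<k} \<times> {..<B}"]) auto

lemma pairs_nonempty: "pairs \<noteq> {}"
proof -
  obtain b i where "b < B" "i < k" "i \<noteq> best b" "i \<noteq> ist" using competitor_exists by blast
  then have "(i, b) \<in> pairs" by simp
  then show ?thesis by blast
qed

lemma worst_rate_le: "b < B \<Longrightarrow> i \<in> competitors b \<Longrightarrow> worst_rate al \<le> rate al i b"
  unfolding worst_rate_def using finite_pairs by (intro Min_le) force+

lemma gain_pos: "b < B \<Longrightarrow> i \<in> competitors b \<Longrightarrow> 0 < gain i b"
  using best_less[of b i] w_pos[of i b] unfolding gain_def by simp

lemma diff_variance_pos:
  assumes "b < B" "i \<in> competitors b" "0 < al i b" "0 < al (best b) b"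
  shows "0 < diff_variance al i b"
  using assms lam_pos[of i b] lam_pos[OF best_lt[OF assms(1)] assms(1)] unfolding diff_variance_def
  by (intro add_pos_pos divide_pos_pos) auto

lemma rate_eq:
  assumes "al i b \<noteq> 0" "al (best b) b \<noteq> 0"
  shows "rate al i b = gain i b / diff_variance al i b"
  using assms unfolding gain_def diff_variance_def by (simp add: Gval_eq)

lemma rate_pos:
  assumes "b < B" "i \<in> competitors b" "0 < al i b" "0 < al (best b) b"
  shows "0 < rate al i b"
  using assms gain_pos[OF assms(1,2)] diff_variance_pos[where al=al, OF assms] by (simp add: rate_eq)

lemma column_sum_split:
  assumes "b < B"
  shows "(\<Sum>i<k. al i b) =
    (\<Sum>i\<in>competitors b. al i b) + al (best b) b + (if best b \<noteq> ist then al ist b else 0)"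
proof -
  have "{..<k} = competitors b \<union> {best b, ist}" using best_lt[OF assms] ist_lt by auto
  then have "(\<Sum>i<k. al i b) = (\<Sum>i\<in>competitors b. al i b) + (\<Sum>i\<in>{best b, ist}. al i b)"
    by (simp only:) (rule sum.union_disjoint, auto)
  then show ?thesis by (cases "best b = ist") (simp_all add: add.assoc)
qed

definition balanced :: "(nat \<Rightarrow> nat \<Rightarrow> real) \<Rightarrow> real \<Rightarrow> bool" where
  "balanced al c \<longleftrightarrow> 0 < c \<and> (\<forall>i<k. \<forall>b<B. 0 \<le> al i b) \<and>
     (\<forall>b<B. (al (best b) b)\<^sup>2 / (lam (best b) b)\<^sup>2 = (\<Sum>i\<in>competitors b. (al i b)\<^sup>2 / (lam i b)\<^sup>2)) \<and>
     (\<forall>b<B. \<forall>i\<in>competitors b. rate al i b = c) \<and>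
     (\<forall>b<B. best b \<noteq> ist \<longrightarrow> al ist b = 0)"

lemma balancedD:
  assumes "balanced al c"
  shows "0 < c"
    and "\<And>i b. i < k \<Longrightarrow> b < B \<Longrightarrow> 0 \<le> al i b"
    and "\<And>b. b < B \<Longrightarrow>
      (al (best b) b)\<^sup>2 / (lam (best b) b)\<^sup>2 = (\<Sum>i\<in>competitors b. (al i b)\<^sup>2 / (lam i b)\<^sup>2)"
    and "\<And>i b. b < B \<Longrightarrow> i \<in> competitors b \<Longrightarrow> rate al i b = c"
    and "\<And>b. b < B \<Longrightarrow> best b \<noteq> ist \<Longrightarrow> al ist b = 0"
  using assms unfolding balanced_def by auto

lemma rate_nonzero_pos:
  assumes "rate al i b \<noteq> 0" "0 \<le> al i b" "0 \<le> al (best b) b"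
  shows "0 < al i b" "0 < al (best b) b"
proof -
  have "al i b \<noteq> 0" "al (best b) b \<noteq> 0" using assms(1) Gval_eq_0 by force+
  then show "0 < al i b" "0 < al (best b) b" using assms(2,3) by simp_all
qed

lemma balanced_pos:
  assumes "balanced al c" "b < B" "i \<in> competitors b"
  shows "0 < al i b" "0 < al (best b) b"
proof -
  have "rate al i b \<noteq> 0" using balancedD(1,4)[OF assms(1)] assms(2,3) by force
  moreover have "0 \<le> al i b" "0 \<le> al (best b) b"
    using balancedD(2)[OF assms(1)] assms(2,3) best_lt by auto
  ultimately show "0 < al i b" "0 < al (best b) b" by (rule rate_nonzero_pos)+
qed

lemma balanced_idle_column:
  assumes "balanced al c" "b < B" "competitors b = {}"
  shows "al (best b) b = 0"
  using balancedD(3)[OF assms(1,2)] assms(3) lam_pos[OF best_lt[OF assms(2)] assms(2)] by simp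

lemma worst_rate_balanced:
  assumes "balanced al c"
  shows "worst_rate al = c"
proof -
  have "(\<lambda>(i, b). rate al i b) ` pairs = {c}"
    using pairs_nonempty balancedD(4)[OF assms] by fastforce
  then show ?thesis unfolding worst_rate_def by simp
qed

lemma balanced_scale:
  assumes "balanced al c" "0 < t"
  shows "balanced (\<lambda>i b. t * al i b) (t * c)"
  unfolding balanced_def
proof (intro conjI allI impI ballI)
  show "0 < t * c" using balancedD(1)[OF assms(1)] assms(2) by simp
  show "0 \<le> t * al i b" if "i < k" "b < B" for i b
    using balancedD(2)[OF assms(1) that] assms(2) by simp
  show "(t * al (best b) b)\<^sup>2 / (lam (best b) b)\<^sup>2 = (\<Sum>i\<in>competitors b. (t * al i b)\<^sup>2 / (lam i b)\<^sup>2)"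
    if "b < B" for b
  proof -
    have "(t * al (best b) b)\<^sup>2 / (lam (best b) b)\<^sup>2 = t\<^sup>2 * ((al (best b) b)\<^sup>2 / (lam (best b) b)\<^sup>2)"
      by (simp add: power_mult_distrib)
    also have "\<dots> = t\<^sup>2 * (\<Sum>i\<in>competitors b. (al i b)\<^sup>2 / (lam i b)\<^sup>2)"
      using balancedD(3)[OF assms(1) that] by simp
    finally show ?thesis by (simp add: sum_distrib_left power_mult_distrib)
  qed
  show "rate (\<lambda>i b. t * al i b) i b = t * c" if "b < B" "i \<in> competitors b" for i b
    using balancedD(4)[OF assms(1) that] assms(2) by (simp add: Gval_scale mult.left_commute)
  show "t * al ist b = 0" if "b < B" "best b \<noteq> ist" for b
    using balancedD(5)[OF assms(1) that] by simp
qed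

lemma balancing_points:
  "\<exists>u. \<forall>b<B. competitors b \<noteq> {} \<longrightarrow> 0 < u b \<and> (\<forall>i\<in>competitors b. u b < gain i b) \<and>
     (lam (best b) b)\<^sup>2 / (u b)\<^sup>2 = (\<Sum>i\<in>competitors b. (lam i b)\<^sup>2 / (gain i b - u b)\<^sup>2)"
proof -
  have "\<forall>b\<in>{b. b < B \<and> competitors b \<noteq> {}}. \<exists>u>0. (\<forall>i\<in>competitors b. u < gain i b) \<and>
      (lam (best b) b)\<^sup>2 / u\<^sup>2 = (\<Sum>i\<in>competitors b. (lam i b)\<^sup>2 / (gain i b - u)\<^sup>2)"
  proof
    fix b assume "b \<in> {b. b < B \<and> competitors b \<noteq> {}}"
    then show "\<exists>u>0. (\<forall>i\<in>competitors b. u < gain i b) \<and>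
      (lam (best b) b)\<^sup>2 / u\<^sup>2 = (\<Sum>i\<in>competitors b. (lam i b)\<^sup>2 / (gain i b - u)\<^sup>2)"
      using gain_pos lam_pos best_lt by (intro balancing_point_exists) auto
  qed
  from bchoice[OF this] show ?thesis by auto
qed

definition equalizer :: "(nat \<Rightarrow> real) \<Rightarrow> nat \<Rightarrow> nat \<Rightarrow> real" where
  "equalizer u i b =
    (if b < B \<and> competitors b \<noteq> {} then
       if i = best b then (lam i b)\<^sup>2 / u b
       else if i \<in> competitors b then (lam i b)\<^sup>2 / (gain i b - u b) else 0
     else 0)"

lemma rate_equalizer:
  assumes "b < B" "i \<in> competitors b" "0 < u b" "u b < gain i b"
  shows "rate (equalizer u) i b = 1"
proof -
  have "competitors b \<noteq> {}" using assms(2) by blast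
  then have "equalizer u (best b) b = (lam (best b) b)\<^sup>2 / u b"
    "equalizer u i b = (lam i b)\<^sup>2 / (gain i b - u b)"
    using assms(1,2) unfolding equalizer_def by auto
  moreover have "0 < lam i b" "0 < lam (best b) b" using assms(1,2) lam_pos best_lt by auto
  ultimately have "diff_variance (equalizer u) i b = gain i b"
    "equalizer u i b \<noteq> 0" "equalizer u (best b) b \<noteq> 0"
    using assms(3,4) unfolding diff_variance_def by simp_all
  then show ?thesis using gain_pos[OF assms(1,2)] by (simp add: rate_eq)
qed

lemma exists_balanced: "\<exists>al. balanced al 1"
proof -
  obtain u where u: "\<And>b. b < B \<Longrightarrow> competitors b \<noteq> {} \<Longrightarrow>
      0 < u b \<and> (\<forall>i\<in>competitors b. u b < gain i b) \<and>
      (lam (best b) b)\<^sup>2 / (u b)\<^sup>2 = (\<Sum>i\<in>competitors b. (lam i b)\<^sup>2 / (gain i b - u b)\<^sup>2)"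
    using balancing_points by blast
  have "balanced (equalizer u) 1"
    unfolding balanced_def
  proof (intro conjI allI impI ballI)
    show "0 \<le> equalizer u i b" for i b
      using u unfolding equalizer_def by (auto simp: less_imp_le)
    show "equalizer u ist b = 0" if "b < B" "best b \<noteq> ist" for b
      using that unfolding equalizer_def by auto
    show "rate (equalizer u) i b = 1" if "b < B" "i \<in> competitors b" for i b
    proof -
      have "competitors b \<noteq> {}" using that(2) by blast
      then show ?thesis using u[OF that(1)] that by (intro rate_equalizer) auto
    qed
    show "(equalizer u (best b) b)\<^sup>2 / (lam (best b) b)\<^sup>2 =
        (\<Sum>i\<in>competitors b. (equalizer u i b)\<^sup>2 / (lam i b)\<^sup>2)" if "b < B" for b
    proof (cases "competitors b = {}")
      case True
      then show ?thesis unfolding equalizer_def by simp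
    next
      case False
      have "(equalizer u i b)\<^sup>2 / (lam i b)\<^sup>2 = (lam i b)\<^sup>2 / (gain i b - u b)\<^sup>2"
        if "i \<in> competitors b" for i
        using that \<open>b < B\<close> False lam_pos[of i b] unfolding equalizer_def
        by (simp add: power_divide power2_eq_square)
      moreover have "(equalizer u (best b) b)\<^sup>2 / (lam (best b) b)\<^sup>2 = (lam (best b) b)\<^sup>2 / (u b)\<^sup>2"
        using that False lam_pos[OF best_lt[OF that] that] unfolding equalizer_def
        by (simp add: power_divide power2_eq_square)
      ultimately show ?thesis using u[OF that False] by simp
    qed
  qed simp
  then show ?thesis by blast
qed

lemma exists_feasible_balanced: "\<exists>al c. feasible k B al \<and> balanced al c"
proof -
  obtain al where al: "balanced al 1" using exists_balanced by blast
  define T where "T = (\<Sum>i<k. \<Sum>b<B. al i b)"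
  obtain b i where bi: "b < B" "i \<in> competitors b"
    using competitor_exists by (metis mem_competitors)
  note nonneg = balancedD(2)[OF al]
  have row: "0 < (\<Sum>b<B. al i b)"
    using bi balanced_pos(1)[OF al bi] nonneg by (intro sum_pos2[where i=b]) auto
  have "0 < T"
    unfolding T_def by (rule sum_pos2[where i=i]) (use bi nonneg row in \<open>auto intro: sum_nonneg\<close>)
  moreover have "(\<Sum>i<k. \<Sum>b<B. 1 / T * al i b) = 1 / T * T"
    unfolding T_def by (simp add: sum_distrib_left)
  ultimately have "feasible k B (\<lambda>i b. 1 / T * al i b)"
    unfolding feasible_def using balancedD(2)[OF al] by simp
  moreover have "balanced (\<lambda>i b. 1 / T * al i b) (1 / T * 1)"
    using al \<open>0 < T\<close> by (intro balanced_scale) simp_all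
  ultimately show ?thesis by blast
qed

definition share :: "(nat \<Rightarrow> nat \<Rightarrow> real) \<Rightarrow> nat \<Rightarrow> nat \<Rightarrow> real" where
  "share al i b = (al i b / lam i b)\<^sup>2 / (al (best b) b / lam (best b) b)\<^sup>2"

definition shared_mass :: "(nat \<Rightarrow> nat \<Rightarrow> real) \<Rightarrow> (nat \<Rightarrow> nat \<Rightarrow> real) \<Rightarrow> nat \<Rightarrow> nat \<Rightarrow> real" where
  "shared_mass al be i b = be i b + share al i b * be (best b) b"

definition slack :: "(nat \<Rightarrow> nat \<Rightarrow> real) \<Rightarrow> nat \<Rightarrow> real" where
  "slack be b = (if competitors b = {} then be (best b) b else 0) + (if best b \<noteq> ist then be ist b else 0)"

lemma sum_share:
  assumes "balanced al c" "b < B" "competitors b \<noteq> {}"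
  shows "(\<Sum>i\<in>competitors b. share al i b) = 1"
proof -
  obtain i where "i \<in> competitors b" using assms(3) by blast
  then have "0 < al (best b) b" using balanced_pos(2)[OF assms(1,2)] by blast
  moreover have "0 < lam (best b) b" using lam_pos best_lt assms(2) by blast
  ultimately have "(al (best b) b)\<^sup>2 / (lam (best b) b)\<^sup>2 \<noteq> 0" by simp
  moreover have "(\<Sum>i\<in>competitors b. share al i b)
      = (\<Sum>i\<in>competitors b. (al i b)\<^sup>2 / (lam i b)\<^sup>2) / ((al (best b) b)\<^sup>2 / (lam (best b) b)\<^sup>2)"
    unfolding share_def power_divide by (rule sum_divide_distrib[symmetric])
  ultimately show ?thesis using balancedD(3)[OF assms(1,2)] by simp
qed

lemma column_sum_shared_mass:
  assumes "balanced al c" "b < B"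
  shows "(\<Sum>i<k. be i b) = (\<Sum>i\<in>competitors b. shared_mass al be i b) + slack be b"
proof -
  have "(\<Sum>i\<in>competitors b. shared_mass al be i b)
      = (\<Sum>i\<in>competitors b. be i b) + (\<Sum>i\<in>competitors b. share al i b) * be (best b) b"
    unfolding shared_mass_def by (simp add: sum.distrib sum_distrib_right)
  then show ?thesis
    using column_sum_split[OF assms(2), of be] sum_share[OF assms] unfolding slack_def
    by (cases "competitors b = {}") simp_all
qed

lemma slack_nonneg: "feasible k B be \<Longrightarrow> b < B \<Longrightarrow> 0 \<le> slack be b"
  unfolding slack_def using feasible_nonneg best_lt ist_lt by auto

lemma slack_balanced:
  assumes "balanced al c" "b < B"
  shows "slack al b = 0"
  using balanced_idle_column[OF assms] balancedD(5)[OF assms] unfolding slack_def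
  by (cases "competitors b = {}") simp_all

lemma rate_tangent_gap:
  assumes al: "balanced al c" and b: "b < B" "i \<in> competitors b"
    and be: "0 < be i b" "0 < be (best b) b"
  shows "c * shared_mass al be i b - rate be i b * shared_mass al al i b =
    gain i b * ((lam (best b) b)\<^sup>2 * (be (best b) b * al i b - be i b * al (best b) b)\<^sup>2 /
      (diff_variance al i b * diff_variance be i b * be i b * be (best b) b * (al (best b) b)\<^sup>2))"
proof -
  have "0 < al i b" "0 < al (best b) b" using balanced_pos[OF al b] by simp_all
  have "0 < lam i b" "0 < lam (best b) b" using b lam_pos best_lt by simp_all
  have "c = gain i b / diff_variance al i b"
    using balancedD(4)[OF al b] \<open>0 < al i b\<close> \<open>0 < al (best b) b\<close> by (simp add: rate_eq)
  moreover have "rate be i b = gain i b / diff_variance be i b" using be by (simp add: rate_eq)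
  ultimately have "c * shared_mass al be i b - rate be i b * shared_mass al al i b =
      gain i b * (shared_mass al be i b / diff_variance al i b - shared_mass al al i b / diff_variance be i b)"
    by (simp add: right_diff_distrib)
  also have "shared_mass al be i b / diff_variance al i b - shared_mass al al i b / diff_variance be i b
      = (lam (best b) b)\<^sup>2 * (be (best b) b * al i b - be i b * al (best b) b)\<^sup>2 /
        (diff_variance al i b * diff_variance be i b * be i b * be (best b) b * (al (best b) b)\<^sup>2)"
    unfolding shared_mass_def share_def diff_variance_def
    by (rule harmonic_tangent_gap) (use be \<open>0 < al i b\<close> \<open>0 < al (best b) b\<close>
        \<open>0 < lam i b\<close> \<open>0 < lam (best b) b\<close> in auto)
  finally show ?thesis .
qed

lemma rate_tangent_le:
  assumes al: "balanced al c" and b: "b < B" "i \<in> competitors b"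
    and be: "0 \<le> be i b" "0 \<le> be (best b) b"
  shows "rate be i b * shared_mass al al i b \<le> c * shared_mass al be i b"
proof (cases "0 < be i b \<and> 0 < be (best b) b")
  case True
  then have "0 < diff_variance al i b" "0 < diff_variance be i b"
    using diff_variance_pos[OF b] balanced_pos[OF al b] by simp_all
  then have "0 \<le> gain i b * ((lam (best b) b)\<^sup>2 * (be (best b) b * al i b - be i b * al (best b) b)\<^sup>2 /
      (diff_variance al i b * diff_variance be i b * be i b * be (best b) b * (al (best b) b)\<^sup>2))"
    using True gain_pos[OF b] by (intro mult_nonneg_nonneg divide_nonneg_nonneg) auto
  then show ?thesis using rate_tangent_gap[where be=be, OF al b] True by fastforce
next
  case False
  then have "Gval k y lam be i b = 0" using be by (simp add: Gval_eq_0)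
  moreover have "0 \<le> c * shared_mass al be i b"
    using balancedD(1)[OF al] be unfolding shared_mass_def share_def by simp
  ultimately show ?thesis by simp
qed

lemma rate_tangent_eq:
  assumes al: "balanced al c" and b: "b < B" "i \<in> competitors b"
    and be: "0 < be i b" "0 < be (best b) b"
    and eq: "rate be i b * shared_mass al al i b = c * shared_mass al be i b"
  shows "be (best b) b * al i b = be i b * al (best b) b"
proof -
  have "0 < diff_variance al i b" "0 < diff_variance be i b"
    using be diff_variance_pos[OF b] balanced_pos[OF al b] by simp_all
  moreover have "0 < al (best b) b" "0 < lam (best b) b"
    using balanced_pos[OF al b] lam_pos best_lt b by simp_all
  ultimately show ?thesis
    using rate_tangent_gap[where be=be, OF al b be] eq be gain_pos[OF b] by simp
qed

lemma shared_mass_pos: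
  "balanced al c \<Longrightarrow> b < B \<Longrightarrow> i \<in> competitors b \<Longrightarrow> 0 < shared_mass al al i b"
  using balanced_pos[of al c b i] unfolding shared_mass_def share_def
  by (simp add: add_pos_nonneg)

lemma certificate_identity:
  assumes al: "balanced al c" "feasible k B al" and be: "feasible k B be"
  shows "c - worst_rate be = (\<Sum>b<B.
      (\<Sum>i\<in>competitors b. c * shared_mass al be i b - worst_rate be * shared_mass al al i b) +
      c * slack be b)"
proof -
  let ?m = "worst_rate be"
  have column: "(\<Sum>i\<in>competitors b. c * shared_mass al be i b - ?m * shared_mass al al i b) +
      c * slack be b = c * (\<Sum>i<k. be i b) - ?m * (\<Sum>i<k. al i b)" if "b < B" for b
    using column_sum_shared_mass[OF al(1) that, of be] column_sum_shared_mass[OF al(1) that, of al]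
      slack_balanced[OF al(1) that]
    by (simp add: sum_subtractf sum_distrib_left algebra_simps)
  have "(\<Sum>b<B. c * (\<Sum>i<k. be i b) - ?m * (\<Sum>i<k. al i b)) = c - ?m"
    using feasible_total[OF be] feasible_total[OF al(2)]
    by (simp add: sum_subtractf sum_distrib_left[symmetric])
  then show ?thesis using column by simp
qed

lemma certificate_terms_le:
  assumes "balanced al c" "feasible k B be" "b < B" "i \<in> competitors b"
  shows "worst_rate be * shared_mass al al i b \<le> rate be i b * shared_mass al al i b"
    and "rate be i b * shared_mass al al i b \<le> c * shared_mass al be i b"
  using worst_rate_le[OF assms(3,4), of be] shared_mass_pos[OF assms(1,3,4)]
    rate_tangent_le[OF assms(1,3,4)] feasible_nonneg[OF assms(2)] assms(3,4) best_lt
  by simp_all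

lemma worst_rate_le_balanced:
  assumes "balanced al c" "feasible k B al" "feasible k B be"
  shows "worst_rate be \<le> c"
proof -
  have "0 \<le> c * shared_mass al be i b - worst_rate be * shared_mass al al i b"
    if "b < B" "i \<in> competitors b" for b i
    using certificate_terms_le[OF assms(1,3) that] by linarith
  moreover have "0 \<le> c * slack be b" if "b < B" for b
    using slack_nonneg[OF assms(3) that] balancedD(1)[OF assms(1)] by simp
  ultimately have "0 \<le> c - worst_rate be"
    unfolding certificate_identity[OF assms] by (intro sum_nonneg add_nonneg_nonneg) auto
  then show ?thesis by simp
qed

lemma certificate_tight:
  assumes "balanced al c" "feasible k B al" "feasible k B be" "c \<le> worst_rate be"
  shows "\<And>b i. b < B \<Longrightarrow> i \<in> competitors b \<Longrightarrow>
      rate be i b = c \<and> rate be i b * shared_mass al al i b = c * shared_mass al be i b"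
    and "\<And>b. b < B \<Longrightarrow> slack be b = 0"
proof -
  let ?T = "\<lambda>i b. c * shared_mass al be i b - c * shared_mass al al i b"
  have "worst_rate be = c" using worst_rate_le_balanced[OF assms(1-3)] assms(4) by simp
  note le = certificate_terms_le[OF assms(1,3), unfolded this]
  have T: "0 \<le> ?T i b" if "b < B" "i \<in> competitors b" for b i using le[OF that] by linarith
  have S: "0 \<le> c * slack be b" if "b < B" for b
    using slack_nonneg[OF assms(3) that] balancedD(1)[OF assms(1)] by simp
  have "0 \<le> (\<Sum>i\<in>competitors b. ?T i b) + c * slack be b" if "b < B" for b
    using T S that by (intro add_nonneg_nonneg sum_nonneg) auto
  moreover have "(\<Sum>b<B. (\<Sum>i\<in>competitors b. ?T i b) + c * slack be b) = 0"
    using certificate_identity[OF assms(1-3)] \<open>worst_rate be = c\<close> by simp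
  ultimately have total: "(\<Sum>i\<in>competitors b. ?T i b) + c * slack be b = 0" if "b < B" for b
    using that sum_nonneg_eq_0_iff[of "{..<B}" "\<lambda>b. (\<Sum>i\<in>competitors b. ?T i b) + c * slack be b"]
    by simp
  have column: "(\<Sum>i\<in>competitors b. ?T i b) = 0 \<and> c * slack be b = 0" if "b < B" for b
  proof -
    have "0 \<le> (\<Sum>i\<in>competitors b. ?T i b)" by (rule sum_nonneg) (rule T[OF that])
    then show ?thesis using total[OF that] S[OF that] by (intro conjI) linarith+
  qed
  show "slack be b = 0" if "b < B" for b
    using column[OF that] balancedD(1)[OF assms(1)] by simp
  show "rate be i b = c \<and> rate be i b * shared_mass al al i b = c * shared_mass al be i b"
    if "b < B" "i \<in> competitors b" for b i
  proof -
    have "(\<Sum>j\<in>competitors b. ?T j b) = 0 \<longleftrightarrow> (\<forall>j\<in>competitors b. ?T j b = 0)"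
      by (rule sum_nonneg_eq_0_iff[OF finite_competitors]) (rule T[OF that(1)])
    then have "?T i b = 0" using column[OF that(1)] that(2) by blast
    then have worst_eq: "rate be i b * shared_mass al al i b = c * shared_mass al al i b"
      and tangent_eq: "rate be i b * shared_mass al al i b = c * shared_mass al be i b"
      using le[OF that] by linarith+
    have "rate be i b = c" using worst_eq shared_mass_pos[OF assms(1) that] by simp
    with tangent_eq show ?thesis by blast
  qed
qed

lemma balance_of_proportional:
  assumes "balanced al c" "b < B" "competitors b \<noteq> {}"
    and proportional: "\<And>i. i \<in> competitors b \<Longrightarrow> be (best b) b * al i b = be i b * al (best b) b"
  shows "(be (best b) b)\<^sup>2 / (lam (best b) b)\<^sup>2 = (\<Sum>i\<in>competitors b. (be i b)\<^sup>2 / (lam i b)\<^sup>2)"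
proof -
  obtain i0 where "i0 \<in> competitors b" using assms(3) by blast
  then have "0 < al (best b) b" using balanced_pos(2)[OF assms(1,2)] by blast
  define t where "t = be (best b) b / al (best b) b"
  have "be i b = t * al i b" if "i \<in> competitors b" for i
    using proportional[OF that] \<open>0 < al (best b) b\<close> unfolding t_def by (simp add: field_simps)
  then have "(\<Sum>i\<in>competitors b. (be i b)\<^sup>2 / (lam i b)\<^sup>2)
      = t\<^sup>2 * (\<Sum>i\<in>competitors b. (al i b)\<^sup>2 / (lam i b)\<^sup>2)"
    by (simp add: sum_distrib_left power_mult_distrib)
  also have "\<dots> = t\<^sup>2 * ((al (best b) b)\<^sup>2 / (lam (best b) b)\<^sup>2)"
    using balancedD(3)[OF assms(1,2)] by simp
  also have "\<dots> = (be (best b) b)\<^sup>2 / (lam (best b) b)\<^sup>2"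
    using \<open>0 < al (best b) b\<close> unfolding t_def by (simp add: power_divide)
  finally show ?thesis by simp
qed

lemma balanced_of_worst_rate_ge:
  assumes "balanced al c" "feasible k B al" "feasible k B be" "c \<le> worst_rate be"
  shows "balanced be c"
  unfolding balanced_def
proof (intro conjI allI impI ballI)
  note tight = certificate_tight[OF assms]
  note nonneg = feasible_nonneg[OF assms(3)]
  show "0 < c" using balancedD(1)[OF assms(1)] .
  show "0 \<le> be i b" if "i < k" "b < B" for i b using nonneg that .
  show rate: "rate be i b = c" if "b < B" "i \<in> competitors b" for b i
    using tight(1)[OF that] by simp
  show "be ist b = 0" if "b < B" "best b \<noteq> ist" for b
    using tight(2)[OF that(1)] that nonneg[of ist b] nonneg[of "best b" b] ist_lt best_lt
    unfolding slack_def by (cases "competitors b = {}") simp_all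
  show "(be (best b) b)\<^sup>2 / (lam (best b) b)\<^sup>2 = (\<Sum>i\<in>competitors b. (be i b)\<^sup>2 / (lam i b)\<^sup>2)"
    if "b < B" for b
  proof (cases "competitors b = {}")
    case True
    then have "be (best b) b = 0"
      using tight(2)[OF that] that nonneg[of ist b] nonneg[of "best b" b] ist_lt best_lt
      unfolding slack_def by (cases "best b = ist") simp_all
    then show ?thesis using True by simp
  next
    case False
    have "be (best b) b * al i b = be i b * al (best b) b" if "i \<in> competitors b" for i
    proof -
      have "rate be i b \<noteq> 0" using rate[OF \<open>b < B\<close> that] balancedD(1)[OF assms(1)] by simp
      moreover have be: "0 \<le> be i b" "0 \<le> be (best b) b"
        using nonneg that \<open>b < B\<close> best_lt by simp_all
      ultimately have "0 < be i b" "0 < be (best b) b" by (rule rate_nonzero_pos)+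
      with tight(1)[OF \<open>b < B\<close> that] show ?thesis
        by (intro rate_tangent_eq[OF assms(1) \<open>b < B\<close> that]) blast+
    qed
    then show ?thesis using balance_of_proportional[OF assms(1) that False] by blast
  qed
qed

lemma column_vanishes:
  assumes "b < B" and nonneg: "\<And>i. i < k \<Longrightarrow> 0 \<le> al i b"
    and balance: "(al (best b) b)\<^sup>2 / (lam (best b) b)\<^sup>2 = (\<Sum>i\<in>competitors b. (al i b)\<^sup>2 / (lam i b)\<^sup>2)"
    and idle: "best b \<noteq> ist \<Longrightarrow> al ist b = 0"
    and zero_rate: "\<And>i. i \<in> competitors b \<Longrightarrow> rate al i b = 0"
  shows "(\<Sum>i<k. al i b) = 0"
proof -
  have "0 < lam (best b) b" using lam_pos best_lt assms(1) by blast
  have "al (best b) b = 0"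
  proof (rule ccontr)
    assume "al (best b) b \<noteq> 0"
    then have "0 < al (best b) b" using nonneg best_lt assms(1) by force
    have "al i b = 0" if "i \<in> competitors b" for i
    proof (rule ccontr)
      assume "al i b \<noteq> 0"
      then have "0 < al i b" using nonneg[of i] that by force
      then show False
        using rate_pos[where al=al, OF assms(1) that \<open>0 < al i b\<close> \<open>0 < al (best b) b\<close>] zero_rate[OF that] by simp
    qed
    then have "(al (best b) b)\<^sup>2 / (lam (best b) b)\<^sup>2 = 0" using balance by simp
    then show False using \<open>0 < al (best b) b\<close> \<open>0 < lam (best b) b\<close> by simp
  qed
  then have "\<forall>i\<in>competitors b. (al i b)\<^sup>2 / (lam i b)\<^sup>2 = 0"
    using balance sum_nonneg_eq_0_iff[of "competitors b" "\<lambda>i. (al i b)\<^sup>2 / (lam i b)\<^sup>2"] by simp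
  then have "\<forall>i\<in>competitors b. al i b = 0" using lam_pos assms(1) by fastforce
  then show ?thesis
    using column_sum_split[OF assms(1), of al] \<open>al (best b) b = 0\<close> idle by simp
qed

lemma ex_balanced_iff:
  assumes "feasible k B al"
  shows "(\<exists>c. balanced al c) \<longleftrightarrow>
    (\<forall>b<B. (al (best b) b)\<^sup>2 / (lam (best b) b)\<^sup>2 = (\<Sum>i\<in>competitors b. (al i b)\<^sup>2 / (lam i b)\<^sup>2)) \<and>
    (\<forall>(i, b)\<in>pairs. \<forall>(j, b')\<in>pairs. rate al i b = rate al j b') \<and>
    (\<forall>b<B. best b \<noteq> ist \<longrightarrow> al ist b = 0)"
    (is "_ \<longleftrightarrow> ?balance \<and> ?equal \<and> ?idle")
proof
  assume "\<exists>c. balanced al c"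
  then obtain c where "balanced al c" by blast
  then show "?balance \<and> ?equal \<and> ?idle" using balancedD[of al c] by auto
next
  assume conds: "?balance \<and> ?equal \<and> ?idle"
  obtain b0 i0 where "b0 < B" "i0 \<in> competitors b0"
    using competitor_exists by (metis mem_competitors)
  then have p0: "(i0, b0) \<in> pairs" by simp
  define c where "c = rate al i0 b0"
  have rate_c: "rate al i b = c" if "b < B" "i \<in> competitors b" for i b
    using conds p0 that unfolding c_def by fastforce
  note nonneg = feasible_nonneg[OF assms]
  have "0 \<le> c"
    using p0 nonneg best_lt w_pos[of i0 b0] unfolding c_def by (simp add: Gval_nonneg)
  moreover have "c \<noteq> 0"
  proof
    assume "c = 0"
    then have "(\<Sum>i<k. al i b) = 0" if "b < B" for b
      using that conds nonneg rate_c by (intro column_vanishes) auto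
    then show False using feasible_total[OF assms] by simp
  qed
  ultimately have "balanced al c"
    unfolding balanced_def using conds nonneg rate_c by auto
  then show "\<exists>c. balanced al c" ..
qed

theorem maximizer_iff_balanced:
  assumes "feasible k B al"
  shows "(\<forall>be. feasible k B be \<longrightarrow> worst_rate be \<le> worst_rate al) \<longleftrightarrow> (\<exists>c. balanced al c)"
proof
  assume max: "\<forall>be. feasible k B be \<longrightarrow> worst_rate be \<le> worst_rate al"
  obtain al' c where "feasible k B al'" "balanced al' c" using exists_feasible_balanced by blast
  then have "balanced al c"
    using max worst_rate_balanced by (intro balanced_of_worst_rate_ge[OF _ _ assms]) auto
  then show "\<exists>c. balanced al c" ..
next
  assume "\<exists>c. balanced al c"
  then obtain c where "balanced al c" ..
  then show "\<forall>be. feasible k B be \<longrightarrow> worst_rate be \<le> worst_rate al"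
    using worst_rate_le_balanced[OF _ assms] worst_rate_balanced by simp
qed

end

theorem theorem3:
  fixes k B :: nat and p :: "nat \<Rightarrow> real" and y lam al :: "nat \<Rightarrow> nat \<Rightarrow> real"
  assumes k2: "2 \<le> k"
    and ppos: "\<forall>b<B. 0 < p b"
    and psum: "(\<Sum>b<B. p b) = 1"
    and lampos: "\<forall>i<k. \<forall>b<B. 0 < lam i b"
    and ib_unique: "\<forall>b<B. \<exists>!i. i < k \<and> (\<forall>j<k. y i b \<le> y j b)"
    and istar_unique: "\<exists>!i. i < k \<and> (\<forall>j<k. freq k B p y j \<le> freq k B p y i)"
    and feas: "feasible k B al"
  shows "optimal k B p y lam al \<longleftrightarrow>
     ((\<forall>b<B. (al (ibest k y b) b)\<^sup>2 / (lam (ibest k y b) b)\<^sup>2 =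
              (\<Sum>i\<in>{i. i < k \<and> i \<noteq> ibest k y b \<and> i \<noteq> istar k B p y}. (al i b)\<^sup>2 / (lam i b)\<^sup>2))
      \<and> (\<forall>(i, b)\<in>Xi k B p y. \<forall>(j, b')\<in>Xi k B p y.
              Wt k B p y i b * Gval k y lam al i b = Wt k B p y j b' * Gval k y lam al j b')
      \<and> (\<forall>b<B. ibest k y b \<noteq> istar k B p y \<longrightarrow> al (istar k B p y) b = 0))"
proof -
  let ?ist = "istar k B p y"
  obtain b where b: "b < B" "ibest k y b = ?ist"
    using istar_is_best_somewhere[OF ib_unique istar_unique psum] by blast
  have "?ist < k" using istar_maximal[OF istar_unique] by simp
  have "(if ?ist = 0 then 1 else 0) < k" "(if ?ist = 0 then 1 else 0) \<noteq> ?ist" using k2 by auto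
  then have "\<exists>b<B. \<exists>i<k. i \<noteq> ibest k y b \<and> i \<noteq> ?ist" using b by (intro exI[of _ b]) auto
  then interpret max_min_allocation k B y lam "Wt k B p y" ?ist
    by unfold_locales (simp_all add: ib_unique lampos Wt_pos \<open>?ist < k\<close>)
  have "Xi k B p y = pairs" unfolding Xi_def pairs_def by auto
  then have "objective k B p y lam = worst_rate"
    unfolding objective_def worst_rate_def by (intro ext) simp
  then show ?thesis
    unfolding optimal_def competitors_def[symmetric] \<open>Xi k B p y = pairs\<close>
    using maximizer_iff_balanced[OF feas] ex_balanced_iff[OF feas] feas by simp
qed

end
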